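(* Let $R$ be an abelian $\star$-ring. If $a\in R$ is $\star$-clean, then $ae$ is $\star$-clean for every $e\in P(R)$.
   Context: Rings are associative with identity; $R$ is abelian if all its idempotents are central. A $\star$-ring is a ring with a map $\star$ satisfying $(x+y)^\star=x^\star+y^\star$, $(xy)^\star=y^\star x^\star$, $(x^\star)^\star=x$. A projection is $p$ with $p^2=p=p^\star$; $P(R)$ is the set of projections, $U(R)$ the units. An element $x$ is $\star$-clean if $x=u+p$ with $u\in U(R)$, $p\in P(R)$. *)

theory Defs
  imports Main
begin

definition star_ring :: "('a::ring_1 \<Rightarrow> 'a) \<Rightarrow> bool" where
  "star_ring s \<longleftrightarrow> (\<forall>x y. s (x + y) = s x + s y) \<and> (\<forall>x y. s (x * y) = s y * s x)
     \<and> (\<forall>x. s (s x) = x)"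

definition abelian_ring :: "'a::ring_1 itself \<Rightarrow> bool" where
  "abelian_ring _ \<longleftrightarrow> (\<forall>e::'a. e * e = e \<longrightarrow> (\<forall>x. e * x = x * e))"

definition projections :: "('a::ring_1 \<Rightarrow> 'a) \<Rightarrow> 'a set" where
  "projections s = {p. p * p = p \<and> p = s p}"

definition ring_units :: "'a::ring_1 set" where
  "ring_units = {u. \<exists>v. u * v = 1 \<and> v * u = 1}"

definition star_clean :: "('a::ring_1 \<Rightarrow> 'a) \<Rightarrow> 'a \<Rightarrow> bool" where
  "star_clean s x \<longleftrightarrow> (\<exists>u p. u \<in> ring_units \<and> p \<in> projections s \<and> x = u + p)"

end

theory Submission
  imports Defs
begin

text \<open>Write \<open>a = u + p\<close> and put \<open>f = 1 - e\<close>. Since \<open>e\<close> is central, \<open>ae = (ue - f) + (pe + f)\<close>: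
  the element \<open>ue - f\<close> is a unit with inverse \<open>u\<^sup>-\<^sup>1e - f\<close>, because \<open>e\<close> and \<open>f\<close> are
  orthogonal central idempotents summing to \<open>1\<close>, and \<open>pe + f\<close> is a projection, being the sum of
  the orthogonal commuting projections \<open>pe\<close> and \<open>f\<close>.\<close>

lemma star_ring_one:
  assumes "star_ring s"
  shows "s 1 = 1"
proof -
  have "s 1 = s 1 * s (s 1)"
    using assms unfolding star_ring_def by simp
  also have "\<dots> = s (s 1 * 1)"
    using assms unfolding star_ring_def by metis
  also have "\<dots> = 1"
    using assms unfolding star_ring_def by simp
  finally show ?thesis .
qed

lemma star_ring_diff:
  assumes "star_ring s"
  shows "s (x - y) = s x - s y"
proof -
  have "s x = s (x - y) + s y"
    using assms unfolding star_ring_def by (metis diff_add_cancel)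
  then show ?thesis
    by (simp add: algebra_simps)
qed

lemma abelian_ring_idempotent_central:
  assumes "abelian_ring TYPE('a::ring_1)" and "(e::'a) * e = e"
  shows "e * x = x * e"
  using assms unfolding abelian_ring_def by blast

lemma idempotent_complement:
  fixes e :: "'a::ring_1"
  assumes "e * e = e"
  shows "(1 - e) * (1 - e) = 1 - e" and "e * (1 - e) = 0" and "(1 - e) * e = 0"
  using assms by (simp_all add: algebra_simps)

lemma unit_corner_minus_complement:
  fixes u e :: "'a::ring_1"
  assumes "u \<in> ring_units" and "e * e = e" and central: "\<And>x. e * x = x * e"
  shows "u * e - (1 - e) \<in> ring_units"
proof -
  obtain v where uv: "u * v = 1" "v * u = 1"
    using assms(1) unfolding ring_units_def by blast
  have corner: "x * e * (y * e) = x * y * e" for x y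
    by (metis assms(2) central mult.assoc)
  have cross: "x * e * (1 - e) = 0" "(1 - e) * (x * e) = 0" for x
    using idempotent_complement[OF assms(2)] central
    by (metis mult.assoc mult_zero_right, metis mult.assoc mult_zero_left)
  have inverse: "(x * e - (1 - e)) * (y * e - (1 - e)) = 1" if "x * y = 1" for x y
  proof -
    have "(x * e - (1 - e)) * (y * e - (1 - e))
        = x * e * (y * e) - x * e * (1 - e) - (1 - e) * (y * e) + (1 - e) * (1 - e)"
      by (simp add: algebra_simps)
    also have "\<dots> = e + (1 - e)"
      using that by (simp add: corner cross idempotent_complement[OF assms(2)])
    finally show ?thesis
      by simp
  qed
  show ?thesis
    unfolding ring_units_def using inverse[OF uv(1)] inverse[OF uv(2)] by blast
qed

lemma projection_corner_plus_complement:
  assumes "star_ring s" and "p \<in> projections s" and "e \<in> projections s" and "p * e = e * p"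
  shows "p * e + (1 - e) \<in> projections s"
proof -
  have pp: "p * p = p" and sp: "s p = p" and ee: "e * e = e" and se: "s e = e"
    using assms(2,3) unfolding projections_def by auto
  have pepe: "p * e * (p * e) = p * e"
    by (metis assms(4) ee pp mult.assoc)
  have cross: "p * e * (1 - e) = 0" "(1 - e) * (p * e) = 0"
    using idempotent_complement[OF ee]
    by (metis mult.assoc mult_zero_right, metis assms(4) mult.assoc mult_zero_left)
  have "(p * e + (1 - e)) * (p * e + (1 - e))
      = p * e * (p * e) + (1 - e) * (p * e) + (p * e * (1 - e) + (1 - e) * (1 - e))"
    by (simp only: distrib_left distrib_right)
  also have "\<dots> = p * e + (1 - e)"
    by (simp add: pepe cross idempotent_complement[OF ee])
  finally have "(p * e + (1 - e)) * (p * e + (1 - e)) = p * e + (1 - e)" .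
  moreover have "s (p * e + (1 - e)) = p * e + (1 - e)"
    using assms(1,4) unfolding star_ring_def
    by (simp add: star_ring_diff[OF assms(1)] star_ring_one[OF assms(1)] sp se)
  ultimately show ?thesis
    unfolding projections_def by simp
qed

theorem proposition4p14:
  fixes s :: "'a::ring_1 \<Rightarrow> 'a" and a :: 'a
  assumes "star_ring s"
    and "abelian_ring TYPE('a)"
    and "star_clean s a"
  shows "\<forall>e \<in> projections s. star_clean s (a * e)"
proof
  fix e assume e: "e \<in> projections s"
  obtain u p where u: "u \<in> ring_units" and p: "p \<in> projections s" and a: "a = u + p"
    using assms(3) unfolding star_clean_def by blast
  have ee: "e * e = e"
    using e unfolding projections_def by simp
  have central: "e * x = x * e" for x
    using abelian_ring_idempotent_central[OF assms(2) ee] .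
  have "a * e = (u * e - (1 - e)) + (p * e + (1 - e))"
    unfolding a by (simp add: algebra_simps)
  then show "star_clean s (a * e)"
    unfolding star_clean_def
    using unit_corner_minus_complement[OF u ee central]
      projection_corner_plus_complement[OF assms(1) p e central[symmetric]]
    by blast
qed

end
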